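(* Fix $m>0$ and $a\in\mathbb R$ with $|a|<m$, and consider the subextremal Kerr spacetime in Boyer--Lindquist coordinates $(t,r,\vartheta,\varphi)$ on the exterior region $r>r_+:=m+\sqrt{m^2-a^2}$, $$\mathfrak g_{m,a}=-\Big(1-\frac{2mr}{\rho^2}\Big)dt^2-\frac{4mar\sin^2\vartheta}{\rho^2}dt\,d\varphi+\frac{\rho^2}{\Delta}dr^2+\rho^2d\vartheta^2+\frac{\Lambda}{\rho^2}\sin^2\vartheta\,d\varphi^2,$$ with $\rho^2=r^2+a^2\cos^2\vartheta$, $\Delta=r^2-2mr+a^2$, $\Lambda=(r^2+a^2)^2-a^2\Delta\sin^2\vartheta$. Then each hypersurface $\{t=\mathrm{const},\ r>r_+\}$ is tangentially maximal; more precisely, the coordinate spheres $\{S_r\}_{r>r_+}$ form a TMCF foliation of each constant-$t$ exterior slice. Equivalently, every constant graph $f\equiv T_0$ solves the TMCF equation on the Kerr exterior.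
   Context: A foliation $\{S_r\}$ of a spacelike hypersurface $M$ (with second fundamental form $K$ in the spacetime) by closed spacelike surfaces is a TMCF foliation if the spacetime mean curvature vector of each leaf is tangent to $M$, equivalently $\mathrm{tr}_{S_r}K=0$ (the trace of $K$ over $TS_r$ with the induced metric) on every leaf; $M$ with such a foliation is called tangentially maximal. For a graph $t=f(r,\vartheta,\varphi)$, "$f$ solves the TMCF equation" means the spheres $\{r=\mathrm{const}\}$ of the graph form a TMCF foliation of the graph. *)

theory Defs
  imports "HOL-Analysis.Analysis"
begin

text \<open>Coordinates on spacetime: x = (x$0, x$1, x$2, x$3) = (t, r, theta, phi).
  Coordinates on a graph t = f(r, theta, phi): y = (y$0, y$1, y$2) = (r, theta, phi).\<close>

definition pd :: "(real^'n \<Rightarrow> real) \<Rightarrow> 'n \<Rightarrow> real^'n \<Rightarrow> real" where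
  "pd F k x = deriv (\<lambda>s. F (x + s *\<^sub>R axis k 1)) 0"

definition christoffel :: "(real^4 \<Rightarrow> real^4^4) \<Rightarrow> real^4 \<Rightarrow> 4 \<Rightarrow> 4 \<Rightarrow> 4 \<Rightarrow> real" where
  "christoffel g x k i j =
     (\<Sum>l\<in>UNIV. matrix_inv (g x) $ k $ l *
        (pd (\<lambda>z. g z $ l $ j) i x + pd (\<lambda>z. g z $ l $ i) j x - pd (\<lambda>z. g z $ i $ j) l x)) / 2"

definition graph_emb :: "(real^3 \<Rightarrow> real) \<Rightarrow> real^3 \<Rightarrow> real^4" where
  "graph_emb f y = (\<chi> \<mu>. if \<mu> = 0 then f y else if \<mu> = 1 then y $ 0
                          else if \<mu> = 2 then y $ 1 else y $ 2)"

definition graph_tangent :: "(real^3 \<Rightarrow> real) \<Rightarrow> real^3 \<Rightarrow> 3 \<Rightarrow> real^4" where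
  "graph_tangent f y i = (\<chi> \<mu>. pd (\<lambda>z. graph_emb f z $ \<mu>) i y)"

definition graph_hess :: "(real^3 \<Rightarrow> real) \<Rightarrow> real^3 \<Rightarrow> 3 \<Rightarrow> 3 \<Rightarrow> real^4" where
  "graph_hess f y i j = (\<chi> \<mu>. pd (\<lambda>z. pd (\<lambda>w. graph_emb f w $ \<mu>) j z) i y)"

definition graph_conormal :: "(real^3 \<Rightarrow> real) \<Rightarrow> real^3 \<Rightarrow> real^4" where
  "graph_conormal f y = (\<chi> \<mu>. if \<mu> = 0 then 1 else if \<mu> = 1 then - pd f 0 y
                              else if \<mu> = 2 then - pd f 1 y else - pd f 2 y)"

definition normal_sq :: "(real^4 \<Rightarrow> real^4^4) \<Rightarrow> (real^3 \<Rightarrow> real) \<Rightarrow> real^3 \<Rightarrow> real" where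
  "normal_sq g f y = (let x = graph_emb f y; \<nu> = graph_conormal f y in
     (\<Sum>\<mu>\<in>UNIV. \<Sum>\<kappa>\<in>UNIV. matrix_inv (g x) $ \<mu> $ \<kappa> * \<nu> $ \<mu> * \<nu> $ \<kappa>))"

text \<open>Unit normal (as a covector) n_mu, for a spacelike graph (normal_sq < 0).\<close>
definition unit_conormal :: "(real^4 \<Rightarrow> real^4^4) \<Rightarrow> (real^3 \<Rightarrow> real) \<Rightarrow> real^3 \<Rightarrow> real^4" where
  "unit_conormal g f y = (1 / sqrt (- normal_sq g f y)) *\<^sub>R graph_conormal f y"

text \<open>Second fundamental form K(e_i,e_j) = g(nabla_{e_i} n, e_j) = - g(n, nabla_{e_i} e_j).\<close>
definition sff :: "(real^4 \<Rightarrow> real^4^4) \<Rightarrow> (real^3 \<Rightarrow> real) \<Rightarrow> real^3 \<Rightarrow> 3 \<Rightarrow> 3 \<Rightarrow> real" where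
  "sff g f y i j = (let x = graph_emb f y; n = unit_conormal g f y;
                        e = graph_tangent f y in
     - (\<Sum>\<mu>\<in>UNIV. n $ \<mu> * (graph_hess f y i j $ \<mu> +
          (\<Sum>\<alpha>\<in>UNIV. \<Sum>\<beta>\<in>UNIV. christoffel g x \<mu> \<alpha> \<beta> * e i $ \<alpha> * e j $ \<beta>))))"

definition induced_metric :: "(real^4 \<Rightarrow> real^4^4) \<Rightarrow> (real^3 \<Rightarrow> real) \<Rightarrow> real^3 \<Rightarrow> 3 \<Rightarrow> 3 \<Rightarrow> real" where
  "induced_metric g f y i j = (let x = graph_emb f y; e = graph_tangent f y in
     (\<Sum>\<alpha>\<in>UNIV. \<Sum>\<beta>\<in>UNIV. g x $ \<alpha> $ \<beta> * e i $ \<alpha> * e j $ \<beta>))"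

text \<open>tr_{S_r} K: trace of K over the tangent space of the leaf S_r = {r = const}
  (spanned by e_theta = e_1, e_phi = e_2) with respect to the induced 2x2 metric sigma,
  i.e. sigma^{AB} K_{AB} with the 2x2 inverse written out.\<close>
definition leaf_trace_K :: "(real^4 \<Rightarrow> real^4^4) \<Rightarrow> (real^3 \<Rightarrow> real) \<Rightarrow> real^3 \<Rightarrow> real" where
  "leaf_trace_K g f y = (let h = induced_metric g f y; K = sff g f y;
       d = h 1 1 * h 2 2 - h 1 2 * h 2 1 in
     (h 2 2 * K 1 1 - h 1 2 * K 2 1 - h 2 1 * K 1 2 + h 1 1 * K 2 2) / d)"

definition solves_TMCF :: "(real^4 \<Rightarrow> real^4^4) \<Rightarrow> (real^3 \<Rightarrow> real) \<Rightarrow> (real^3) set \<Rightarrow> bool" where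
  "solves_TMCF g f U \<longleftrightarrow> (\<forall>y\<in>U. normal_sq g f y < 0 \<and> leaf_trace_K g f y = 0)"

definition kerr_rho2 :: "real \<Rightarrow> real \<Rightarrow> real \<Rightarrow> real" where
  "kerr_rho2 a r \<theta> = r\<^sup>2 + a\<^sup>2 * (cos \<theta>)\<^sup>2"
definition kerr_Delta :: "real \<Rightarrow> real \<Rightarrow> real \<Rightarrow> real" where
  "kerr_Delta m a r = r\<^sup>2 - 2 * m * r + a\<^sup>2"
definition kerr_Lambda :: "real \<Rightarrow> real \<Rightarrow> real \<Rightarrow> real \<Rightarrow> real" where
  "kerr_Lambda m a r \<theta> = (r\<^sup>2 + a\<^sup>2)\<^sup>2 - a\<^sup>2 * kerr_Delta m a r * (sin \<theta>)\<^sup>2"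

definition kerr_metric :: "real \<Rightarrow> real \<Rightarrow> real^4 \<Rightarrow> real^4^4" where
  "kerr_metric m a x = (let r = x $ 1; \<theta> = x $ 2; \<rho>2 = kerr_rho2 a r \<theta> in
     (\<chi> i j.
        if i = 0 \<and> j = 0 then - (1 - 2 * m * r / \<rho>2)
        else if (i = 0 \<and> j = 3) \<or> (i = 3 \<and> j = 0) then - 2 * m * a * r * (sin \<theta>)\<^sup>2 / \<rho>2
        else if i = 1 \<and> j = 1 then \<rho>2 / kerr_Delta m a r
        else if i = 2 \<and> j = 2 then \<rho>2
        else if i = 3 \<and> j = 3 then kerr_Lambda m a r \<theta> * (sin \<theta>)\<^sup>2 / \<rho>2
        else 0))"

definition kerr_rplus :: "real \<Rightarrow> real \<Rightarrow> real" where
  "kerr_rplus m a = m + sqrt (m\<^sup>2 - a\<^sup>2)"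

end

theory Submission
  imports Defs
begin

text \<open>For a constant graph t = T0 the conormal is dt and the leaf tangents are the coordinate
  fields \<open>\<partial>\<^sub>\<theta>\<close>, \<open>\<partial>\<^sub>\<phi>\<close>, so K restricted to a leaf is a multiple of the Christoffel symbols
  \<open>\<Gamma>\<^sup>t\<^sub>\<theta>\<^sub>\<theta>\<close> and \<open>\<Gamma>\<^sup>t\<^sub>\<phi>\<^sub>\<phi>\<close>. In any metric whose only off-diagonal entry is \<open>g\<^sub>t\<^sub>\<phi>\<close> and whose
  components do not depend on t and \<open>\<phi>\<close>, the inverse metric keeps the (t,\<phi>) block structure,
  so \<open>\<Gamma>\<^sup>t\<^sub>\<theta>\<^sub>\<theta>\<close> and \<open>\<Gamma>\<^sup>t\<^sub>\<phi>\<^sub>\<phi>\<close> only involve t- and \<open>\<phi>\<close>-derivatives and vanish. The slice is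
  spacelike because \<open>g\<^sup>t\<^sup>t = g\<^sub>\<phi>\<^sub>\<phi> / (g\<^sub>t\<^sub>t g\<^sub>\<phi>\<^sub>\<phi> - g\<^sub>t\<^sub>\<phi>\<^sup>2)\<close>, which for Kerr equals
  \<open>- g\<^sub>\<phi>\<^sub>\<phi> / (\<Delta> sin\<^sup>2\<theta>) < 0\<close> outside the horizon.\<close>

lemma sum_4_zero_based: "sum f (UNIV :: 4 set) = f 0 + f 1 + f 2 + f 3"
proof -
  have four: "(4::4) = 0" by simp
  show ?thesis unfolding sum_4 four by (simp add: ac_simps)
qed

lemma forall_4_zero_based: "(\<forall>i::4. P i) \<longleftrightarrow> P 0 \<and> P 1 \<and> P 2 \<and> P 3"
proof -
  have four: "(4::4) = 0" by simp
  show ?thesis unfolding forall_4 four by auto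
qed

lemma matrix_inv_eqI:
  fixes A :: "'a::comm_semiring_1^'n^'n"
  assumes "A ** B = mat 1" and "B ** A = mat 1"
  shows "matrix_inv A = B"
proof -
  have "matrix_inv A ** A = mat 1"
    unfolding matrix_inv_def using someI[of "\<lambda>A'. A ** A' = mat 1 \<and> A' ** A = mat 1" B] assms
    by blast
  then show ?thesis
    using assms(1) by (metis matrix_mul_assoc matrix_mul_lid matrix_mul_rid)
qed

definition tphi_block :: "real^4^4 \<Rightarrow> bool" where
  "tphi_block A \<longleftrightarrow>
     A$0$1 = 0 \<and> A$0$2 = 0 \<and> A$1$0 = 0 \<and> A$1$2 = 0 \<and> A$1$3 = 0 \<and>
     A$2$0 = 0 \<and> A$2$1 = 0 \<and> A$2$3 = 0 \<and> A$3$1 = 0 \<and> A$3$2 = 0 \<and> A$3$0 = A$0$3"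

definition tphi_det :: "real^4^4 \<Rightarrow> real" where
  "tphi_det A = A$0$0 * A$3$3 - A$0$3 * A$0$3"

lemma matrix_inv_tphi_block:
  assumes "tphi_block A" and "tphi_det A \<noteq> 0" and "A$1$1 \<noteq> 0" and "A$2$2 \<noteq> 0"
  defines "B \<equiv> (\<chi> i j.
      if i = 0 \<and> j = 0 then A$3$3 / tphi_det A
      else if (i = 0 \<and> j = 3) \<or> (i = 3 \<and> j = 0) then - A$0$3 / tphi_det A
      else if i = 3 \<and> j = 3 then A$0$0 / tphi_det A
      else if i = 1 \<and> j = 1 then 1 / A$1$1
      else if i = 2 \<and> j = 2 then 1 / A$2$2 else 0)"
  shows "matrix_inv A = B"
proof (rule matrix_inv_eqI)
  have det: "A$0$0 * A$3$3 = tphi_det A + A$0$3 * A$0$3"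
    by (simp add: tphi_det_def)
  show "A ** B = mat 1" "B ** A = mat 1"
    using assms unfolding tphi_block_def B_def
    by (simp_all add: matrix_matrix_mult_def mat_def vec_eq_iff forall_4_zero_based
        sum_4_zero_based det field_simps)
qed

lemma matrix_inv_tphi_block_row_0:
  assumes "tphi_block A" and "tphi_det A \<noteq> 0" and "A$1$1 \<noteq> 0" and "A$2$2 \<noteq> 0"
  shows "matrix_inv A $ 0 $ 0 = A$3$3 / tphi_det A"
    and "matrix_inv A $ 0 $ 1 = 0" and "matrix_inv A $ 0 $ 2 = 0"
  by (simp_all add: matrix_inv_tphi_block[OF assms])

lemma pd_eq_0_if_invariant:
  assumes "\<And>s. F (x + s *\<^sub>R axis k 1) = F x"
  shows "pd F k x = 0"
  unfolding pd_def assms by simp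

lemma pd_affine:
  assumes "\<And>s. F (x + s *\<^sub>R axis k 1) = F x + s * c"
  shows "pd F k x = c"
  unfolding pd_def assms by (rule DERIV_imp_deriv) (auto intro!: derivative_eq_intros)

lemma pd_const [simp]: "pd (\<lambda>_. c) k x = 0"
  by (rule pd_eq_0_if_invariant) (rule refl)

lemma graph_tangent_const: "graph_tangent (\<lambda>_. c) y i = graph_emb (\<lambda>_. 0) (axis i 1)"
proof -
  have "pd (\<lambda>z. graph_emb (\<lambda>_. c) z $ \<mu>) i y = graph_emb (\<lambda>_. 0) (axis i 1) $ \<mu>" for \<mu>
    by (rule pd_affine) (simp add: graph_emb_def)
  then show ?thesis by (simp add: graph_tangent_def vec_eq_iff)
qed

lemma graph_tangent_const_theta: "graph_tangent (\<lambda>_. c) y 1 = axis 2 1"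
  and graph_tangent_const_phi: "graph_tangent (\<lambda>_. c) y 2 = axis 3 1"
  by (simp_all add: graph_tangent_const graph_emb_def axis_def vec_eq_iff forall_4_zero_based)

lemma graph_hess_const: "graph_hess (\<lambda>_. c) y i j = 0"
proof -
  have "pd (\<lambda>w. graph_emb (\<lambda>_. c) w $ \<mu>) j z = graph_emb (\<lambda>_. 0) (axis j 1) $ \<mu>" for \<mu> z
    using graph_tangent_const[of c z j] by (simp add: graph_tangent_def vec_eq_iff)
  then show ?thesis by (simp add: graph_hess_def vec_eq_iff)
qed

lemma graph_conormal_const: "graph_conormal (\<lambda>_. c) y = axis 0 1"
  by (simp add: graph_conormal_def axis_def vec_eq_iff)

lemma normal_sq_const_graph:
  "normal_sq g (\<lambda>_. c) y = matrix_inv (g (graph_emb (\<lambda>_. c) y)) $ 0 $ 0"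
  by (simp add: normal_sq_def graph_conormal_const axis_def sum_4_zero_based)

lemma sff_const_graph:
  fixes g :: "real^4 \<Rightarrow> real^4^4" and c :: real and y :: "real^3"
  defines "x \<equiv> graph_emb (\<lambda>_. c) y" and "N \<equiv> normal_sq g (\<lambda>_. c) y"
  shows "sff g (\<lambda>_. c) y 1 1 = - christoffel g x 0 2 2 / sqrt (- N)"
    and "sff g (\<lambda>_. c) y 2 2 = - christoffel g x 0 3 3 / sqrt (- N)"
  unfolding x_def N_def
  by (simp_all add: sff_def unit_conormal_def graph_conormal_const graph_hess_const
      graph_tangent_const_theta graph_tangent_const_phi axis_def sum_4_zero_based)

lemma induced_metric_const_graph:
  fixes g :: "real^4 \<Rightarrow> real^4^4" and c :: real and y :: "real^3"
  defines "x \<equiv> graph_emb (\<lambda>_. c) y"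
  shows "induced_metric g (\<lambda>_. c) y 1 2 = g x $ 2 $ 3"
    and "induced_metric g (\<lambda>_. c) y 2 1 = g x $ 3 $ 2"
  unfolding x_def
  by (simp_all add: induced_metric_def graph_tangent_const_theta graph_tangent_const_phi
      axis_def sum_4_zero_based)

definition stationary_axisymmetric :: "(real^4 \<Rightarrow> real^4^4) \<Rightarrow> bool" where
  "stationary_axisymmetric g \<longleftrightarrow>
     (\<forall>z s. g (z + s *\<^sub>R axis 0 1) = g z \<and> g (z + s *\<^sub>R axis 3 1) = g z)"

lemma pd_metric_stationary_axisymmetric:
  assumes "stationary_axisymmetric g"
  shows "pd (\<lambda>z. g z $ i $ j) 0 x = 0" and "pd (\<lambda>z. g z $ i $ j) 3 x = 0"
  using assms unfolding stationary_axisymmetric_def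
  by (auto intro: pd_eq_0_if_invariant)

lemma christoffel_t_angular_eq_0:
  assumes g: "stationary_axisymmetric g" and block: "\<And>z. tphi_block (g z)"
    and inv: "matrix_inv (g x) $ 0 $ 1 = 0" "matrix_inv (g x) $ 0 $ 2 = 0"
  shows "christoffel g x 0 2 2 = 0" and "christoffel g x 0 3 3 = 0"
proof -
  have "g z $ 0 $ 2 = 0" "g z $ 3 $ 2 = 0" for z
    using block[of z] by (simp_all add: tphi_block_def)
  then have off: "pd (\<lambda>z. g z $ 0 $ 2) k x = 0" "pd (\<lambda>z. g z $ 3 $ 2) k x = 0" for k
    by simp_all
  show "christoffel g x 0 2 2 = 0" "christoffel g x 0 3 3 = 0"
    by (simp_all add: christoffel_def sum_4_zero_based inv off
        pd_metric_stationary_axisymmetric[OF g])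
qed

lemma const_graph_solves_TMCF:
  assumes g: "stationary_axisymmetric g" and block: "\<And>z. tphi_block (g z)"
    and nondeg: "\<And>y. y \<in> U \<Longrightarrow>
      tphi_det (g (graph_emb (\<lambda>_. c) y)) < 0 \<and> g (graph_emb (\<lambda>_. c) y) $ 3 $ 3 > 0 \<and>
      g (graph_emb (\<lambda>_. c) y) $ 1 $ 1 \<noteq> 0 \<and> g (graph_emb (\<lambda>_. c) y) $ 2 $ 2 \<noteq> 0"
  shows "solves_TMCF g (\<lambda>_. c) U"
  unfolding solves_TMCF_def
proof
  fix y assume "y \<in> U"
  define x where "x = graph_emb (\<lambda>_. c) y"
  have det: "tphi_det (g x) < 0" and pos: "g x $ 3 $ 3 > 0"
    and nz: "g x $ 1 $ 1 \<noteq> 0" "g x $ 2 $ 2 \<noteq> 0"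
    using nondeg[OF \<open>y \<in> U\<close>] by (simp_all add: x_def)
  note inv = matrix_inv_tphi_block_row_0[OF block[of x] det[THEN less_imp_neq] nz]
  have "normal_sq g (\<lambda>_. c) y = g x $ 3 $ 3 / tphi_det (g x)"
    unfolding normal_sq_const_graph x_def[symmetric] by (rule inv(1))
  then have spacelike: "normal_sq g (\<lambda>_. c) y < 0"
    using det pos by (simp add: divide_pos_neg)
  have "christoffel g x 0 2 2 = 0" "christoffel g x 0 3 3 = 0"
    by (simp_all add: christoffel_t_angular_eq_0 g block inv)
  then have "sff g (\<lambda>_. c) y 1 1 = 0" "sff g (\<lambda>_. c) y 2 2 = 0"
    by (simp_all add: sff_const_graph x_def)
  moreover have "induced_metric g (\<lambda>_. c) y 1 2 = 0" "induced_metric g (\<lambda>_. c) y 2 1 = 0"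
    using block[of x] by (simp_all add: induced_metric_const_graph tphi_block_def x_def)
  ultimately have "leaf_trace_K g (\<lambda>_. c) y = 0"
    by (simp add: leaf_trace_K_def)
  with spacelike show "normal_sq g (\<lambda>_. c) y < 0 \<and> leaf_trace_K g (\<lambda>_. c) y = 0" ..
qed

lemma kerr_metric_tphi_block: "tphi_block (kerr_metric m a z)"
  by (simp add: tphi_block_def kerr_metric_def Let_def)

lemma stationary_axisymmetric_kerr_metric: "stationary_axisymmetric (kerr_metric m a)"
proof -
  have "kerr_metric m a (z + s *\<^sub>R axis k 1) = kerr_metric m a z" if "k = 0 \<or> k = 3" for z s k
  proof -
    have "(z + s *\<^sub>R axis k 1) $ 1 = z $ 1" "(z + s *\<^sub>R axis k 1) $ 2 = z $ 2"
      using that by (auto simp: axis_def)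
    then show ?thesis by (simp only: kerr_metric_def Let_def)
  qed
  then show ?thesis by (simp add: stationary_axisymmetric_def)
qed

lemma kerr_exterior_pos:
  assumes "\<bar>a\<bar> \<le> m" and "r > kerr_rplus m a"
  shows "r > 0" and "kerr_Delta m a r > 0"
proof -
  have "a\<^sup>2 \<le> m\<^sup>2"
    using assms(1) abs_le_square_iff[of a m] by simp
  then have sq: "sqrt (m\<^sup>2 - a\<^sup>2) \<ge> 0" "(sqrt (m\<^sup>2 - a\<^sup>2))\<^sup>2 = m\<^sup>2 - a\<^sup>2" by simp_all
  have rm: "r - m > sqrt (m\<^sup>2 - a\<^sup>2)" using assms(2) by (simp add: kerr_rplus_def)
  show "r > 0" using assms(1) sq(1) rm by linarith
  have "(sqrt (m\<^sup>2 - a\<^sup>2))\<^sup>2 < (r - m)\<^sup>2"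
    using sq(1) rm by (intro power_strict_mono) auto
  then show "kerr_Delta m a r > 0"
    unfolding sq(2) kerr_Delta_def by (simp add: power2_eq_square algebra_simps)
qed

lemma kerr_rho2_pos: "r \<noteq> 0 \<Longrightarrow> kerr_rho2 a r \<theta> > 0"
  by (simp add: kerr_rho2_def add_pos_nonneg)

lemma kerr_Lambda_pos:
  assumes "m \<ge> 0" and "r > 0" and "kerr_Delta m a r > 0"
  shows "kerr_Lambda m a r \<theta> > 0"
proof -
  have "a\<^sup>2 * kerr_Delta m a r * (sin \<theta>)\<^sup>2 \<le> a\<^sup>2 * kerr_Delta m a r"
    using assms(3) by (simp add: mult_left_le abs_square_le_1)
  also have "\<dots> = (r\<^sup>2 + a\<^sup>2)\<^sup>2 - ((r\<^sup>2 + a\<^sup>2) * r\<^sup>2 + 2 * m * r * a\<^sup>2)"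
    unfolding kerr_Delta_def by algebra
  also have "\<dots> < (r\<^sup>2 + a\<^sup>2)\<^sup>2"
  proof -
    have "(r\<^sup>2 + a\<^sup>2) * r\<^sup>2 > 0" using assms(2) by (simp add: add_pos_nonneg)
    moreover have "2 * m * r * a\<^sup>2 \<ge> 0" using assms(1,2) by simp
    ultimately show ?thesis by linarith
  qed
  finally show ?thesis unfolding kerr_Lambda_def by simp
qed

lemma kerr_Lambda_identity:
  "(kerr_rho2 a r \<theta> - 2 * m * r) * kerr_Lambda m a r \<theta> + (2 * m * a * r)\<^sup>2 * (sin \<theta>)\<^sup>2
     = kerr_Delta m a r * (kerr_rho2 a r \<theta>)\<^sup>2"
  unfolding kerr_rho2_def kerr_Lambda_def kerr_Delta_def cos_squared_eq by algebra

lemma tphi_det_kerr_metric: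
  assumes "kerr_rho2 a (z $ 1) (z $ 2) \<noteq> 0"
  shows "tphi_det (kerr_metric m a z) = - kerr_Delta m a (z $ 1) * (sin (z $ 2))\<^sup>2"
proof -
  define \<rho>2 \<Lambda> S where "\<rho>2 = kerr_rho2 a (z $ 1) (z $ 2)"
    and "\<Lambda> = kerr_Lambda m a (z $ 1) (z $ 2)" and "S = (sin (z $ 2))\<^sup>2"
  have "tphi_det (kerr_metric m a z)
      = - (1 - 2 * m * (z $ 1) / \<rho>2) * (\<Lambda> * S / \<rho>2) - (2 * m * a * (z $ 1) * S / \<rho>2)\<^sup>2"
    by (simp add: tphi_det_def kerr_metric_def Let_def \<rho>2_def \<Lambda>_def S_def power2_eq_square)
  also have "\<dots> = - S * ((\<rho>2 - 2 * m * (z $ 1)) * \<Lambda> + (2 * m * a * (z $ 1))\<^sup>2 * S) / \<rho>2\<^sup>2"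
    using assms unfolding \<rho>2_def[symmetric] by (simp add: field_simps power2_eq_square)
  also have "\<dots> = - kerr_Delta m a (z $ 1) * S"
    using assms kerr_Lambda_identity[of a "z $ 1" "z $ 2" m]
    unfolding \<rho>2_def[symmetric] \<Lambda>_def[symmetric] S_def[symmetric] by (simp add: power2_eq_square)
  finally show ?thesis by (simp add: S_def)
qed

lemma kerr_metric_diag:
  "kerr_metric m a x $ 1 $ 1 = kerr_rho2 a (x $ 1) (x $ 2) / kerr_Delta m a (x $ 1)"
  "kerr_metric m a x $ 2 $ 2 = kerr_rho2 a (x $ 1) (x $ 2)"
  "kerr_metric m a x $ 3 $ 3 =
     kerr_Lambda m a (x $ 1) (x $ 2) * (sin (x $ 2))\<^sup>2 / kerr_rho2 a (x $ 1) (x $ 2)"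
  by (simp_all add: kerr_metric_def Let_def)

lemma kerr_metric_exterior:
  assumes "\<bar>a\<bar> \<le> m" and "x $ 1 > kerr_rplus m a" and "0 < x $ 2" and "x $ 2 < pi"
  shows "tphi_det (kerr_metric m a x) < 0 \<and> kerr_metric m a x $ 3 $ 3 > 0 \<and>
    kerr_metric m a x $ 1 $ 1 \<noteq> 0 \<and> kerr_metric m a x $ 2 $ 2 \<noteq> 0"
proof -
  have "m \<ge> 0" using assms(1) by linarith
  note ext = kerr_exterior_pos[OF assms(1,2)]
  have \<rho>2: "kerr_rho2 a (x $ 1) (x $ 2) > 0" using ext(1) by (simp add: kerr_rho2_pos)
  have \<Lambda>: "kerr_Lambda m a (x $ 1) (x $ 2) > 0" using \<open>m \<ge> 0\<close> ext by (rule kerr_Lambda_pos)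
  have sin: "sin (x $ 2) > 0" using assms(3,4) by (simp add: sin_gt_zero)
  have "tphi_det (kerr_metric m a x) < 0"
    using tphi_det_kerr_metric[of a x m] \<rho>2 ext(2) sin by simp
  moreover have "kerr_metric m a x $ 3 $ 3 > 0"
    unfolding kerr_metric_diag using \<rho>2 \<Lambda> sin by simp
  ultimately show ?thesis
    using \<rho>2 ext(2) by (simp add: kerr_metric_diag)
qed

theorem mainTheorem4:
  fixes m a T0 :: real
  assumes "m > 0" and "\<bar>a\<bar> < m"
  shows "solves_TMCF (kerr_metric m a) (\<lambda>_. T0)
           {y :: real^3. y $ 0 > kerr_rplus m a \<and> 0 < y $ 1 \<and> y $ 1 < pi}"
proof -
  have coords: "graph_emb (\<lambda>_. T0) y $ 1 = y $ 0" "graph_emb (\<lambda>_. T0) y $ 2 = y $ 1" for y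
    by (simp_all add: graph_emb_def)
  show ?thesis
    using assms
    by (intro const_graph_solves_TMCF stationary_axisymmetric_kerr_metric
        kerr_metric_tphi_block kerr_metric_exterior) (auto simp: coords)
qed

end
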